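(* Assume the standing assumptions and additionally that every $\sigma_l$ is differentiable everywhere, and let $\Omega=\Omega_{in}$ with $\lambda>0$, $1\le p<\infty$. Then for every $B\in\mathbb{R}$, the set of dimension tuples $\mathbf{d}=(d_1,\dots,d_{L-1})$ for which there exists a proper $B$-local minimum $(\mathbf{d},\mathbf{W})$ of $E$ is bounded.
   Context: Network: for dimensions $d_0,\dots,d_L$ and weights $\mathbf{W}=(W_1,\dots,W_L)$, $W_l\in\mathbb{R}^{d_{l-1}\times d_l}$, define for a row vector $x\in\mathbb{R}^{d_0}$: $x_0=x$, $z_l=x_{l-1}W_l$, $x_l=\sigma_l.(z_l)$ (elementwise), $f(\mathbf{W},x)=x_L$; $d_0,d_L$ are fixed and $d_1,\dots,d_{L-1}$ vary. $E(\mathbf{d},\mathbf{W})=\frac{1}{|D|}\sum_{(x,y)\in D}e(f(\mathbf{W},x),y)+\Omega(\mathbf{W},\lambda,p)$ with $D$ a finite dataset of pairs $(x,y)$, $x\in\mathbb{R}^{d_0}$, $y\in Y$. $\Omega_{in}(\mathbf{W},\lambda,p)=\lambda\sum_{l=1}^L\sum_{j=1}^{d_l}\|(W_l(i,j))_{i}\|_p$, $\Omega_{out}(\mathbf{W},\lambda,p)=\lambda\sum_{l=1}^L\sum_{i=1}^{d_{l-1}}\|(W_l(i,j))_{j}\|_p$. Standing assumptions: each $\sigma_l$ is left- and right-differentiable everywhere, and there are functions $b_{1,l},b_{2,l}:\mathbb{R}_{\ge0}\to\mathbb{R}_{\ge0}$ with $|\sigma_l(s)|\le b_{1,l}(S)|s|$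 and $|\sigma_l^{\leftarrow}(s)|,|\sigma_l^{\rightarrow}(s)|\le b_{2,l}(S)$ whenever $|s|\le S$; $e$ is nonnegative, differentiable in its first argument, and there is $b_3$ with $e(v,y)\le S\Rightarrow\|\partial e(v,y)/\partial v\|_\infty\le b_3(S)$. Definitions: The fan-in of hidden unit $j$ in layer $l$ ($1\le l\le L-1$) is column $j$ of $W_l$; its fan-out is row $j$ of $W_{l+1}$. A pair $(\mathbf{d},\mathbf{W})$ is a local minimum of $E$ if $\mathbf{W}$ is a local minimum of $E(\mathbf{d},\cdot)$ with $\mathbf{d}$ fixed; it is $B$-locally minimal if moreover $E(\mathbf{d},\mathbf{W})\le B$. The proper dimensionality of $\mathbf{W}$ is the dimension tuple obtained by deleting all hidden units whose fan-in or fan-out (or both) is the zero vector; $(\mathbf{d},\mathbf{W})$ is proper if $\mathbf{d}$ equals the proper dimensionality of $\mathbf{W}$ (i.e. no hidden unit has zero fan-in or zero fan-out). A proper $B$-local minimum is a $B$-locally minimal local minimum that is proper. *)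

theory Defs
  imports "HOL-Analysis.Analysis"
begin

text \<open>Fixed enumeration of a finite index type by {0..<CARD('a)}; used to identify
  the fixed input/output spaces real^'i, real^'o with R^{d_0}, R^{d_L}.\<close>
definition fin_enum :: "nat \<Rightarrow> 'a::finite" where
  "fin_enum = (SOME g. bij_betw g {..<CARD('a)} (UNIV :: 'a set))"

text \<open>Hidden layer vectors: nat-indexed, layer l has components 0..<d l.
  Weights: W l i j is entry (i,j) of W_l (i < d (l-1), j < d l).\<close>
fun layer :: "(nat \<Rightarrow> real \<Rightarrow> real) \<Rightarrow> (nat \<Rightarrow> nat) \<Rightarrow> (nat \<Rightarrow> nat \<Rightarrow> nat \<Rightarrow> real)
              \<Rightarrow> real ^ 'i::finite \<Rightarrow> nat \<Rightarrow> nat \<Rightarrow> real" where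
  "layer \<sigma> d W x 0 = (\<lambda>i. x $ fin_enum i)"
| "layer \<sigma> d W x (Suc l) =
     (\<lambda>j. \<sigma> (Suc l) (\<Sum>i<d l. layer \<sigma> d W x l i * W (Suc l) i j))"

definition net :: "nat \<Rightarrow> (nat \<Rightarrow> real \<Rightarrow> real) \<Rightarrow> (nat \<Rightarrow> nat) \<Rightarrow> (nat \<Rightarrow> nat \<Rightarrow> nat \<Rightarrow> real)
              \<Rightarrow> real ^ 'i::finite \<Rightarrow> real ^ 'o::finite" where
  "net L \<sigma> d W x =
     (\<chi> k. layer \<sigma> d W x L (inv_into {..<CARD('o)} fin_enum k))"

definition Omega_in :: "nat \<Rightarrow> (nat \<Rightarrow> nat) \<Rightarrow> (nat \<Rightarrow> nat \<Rightarrow> nat \<Rightarrow> real) \<Rightarrow> real \<Rightarrow> real \<Rightarrow> real" where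
  "Omega_in L d W lam p =
     lam * (\<Sum>l\<in>{1..L}. \<Sum>j<d l. (\<Sum>i<d (l - 1). \<bar>W l i j\<bar> powr p) powr (1 / p))"

definition E_err :: "nat \<Rightarrow> (nat \<Rightarrow> real \<Rightarrow> real) \<Rightarrow> (real ^ 'o::finite \<Rightarrow> 'y \<Rightarrow> real)
     \<Rightarrow> ((real ^ 'i::finite) \<times> 'y) set \<Rightarrow> real \<Rightarrow> real
     \<Rightarrow> (nat \<Rightarrow> nat) \<Rightarrow> (nat \<Rightarrow> nat \<Rightarrow> nat \<Rightarrow> real) \<Rightarrow> real" where
  "E_err L \<sigma> e D lam p d W =
     (\<Sum>(x, y)\<in>D. e (net L \<sigma> d W x) y) / real (card D) + Omega_in L d W lam p"

text \<open>W is a local minimum of E(d, .) over the weight space of shape d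
  (the max-norm neighbourhood on the finitely many relevant entries).\<close>
definition local_min :: "nat \<Rightarrow> (nat \<Rightarrow> nat) \<Rightarrow> ((nat \<Rightarrow> nat \<Rightarrow> nat \<Rightarrow> real) \<Rightarrow> real)
     \<Rightarrow> (nat \<Rightarrow> nat \<Rightarrow> nat \<Rightarrow> real) \<Rightarrow> bool" where
  "local_min L d F W \<longleftrightarrow>
     (\<exists>\<epsilon>>0. \<forall>W'. (\<forall>l\<in>{1..L}. \<forall>i<d (l - 1). \<forall>j<d l. \<bar>W' l i j - W l i j\<bar> < \<epsilon>)
                  \<longrightarrow> F W \<le> F W')"

text \<open>Proper: no hidden unit has zero fan-in (column j of W_l) or zero fan-out (row j of W_(l+1)).\<close>
definition proper :: "nat \<Rightarrow> (nat \<Rightarrow> nat) \<Rightarrow> (nat \<Rightarrow> nat \<Rightarrow> nat \<Rightarrow> real) \<Rightarrow> bool" where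
  "proper L d W \<longleftrightarrow>
     (\<forall>l\<in>{1..L-1}. \<forall>j<d l. (\<exists>i<d (l - 1). W l i j \<noteq> 0) \<and> (\<exists>k<d (l + 1). W (l + 1) j k \<noteq> 0))"

end

theory Submission
  imports Defs
begin

text \<open>At a B-local minimum the regulariser alone is at most B, so in every layer the
  p-norms of all fan-ins add up to at most B/lam; hence weights and activations on the
  data are bounded independently of the widths. Shrinking the fan-in of a hidden unit j
  by the factor 1 - t lowers the regulariser by lam t |fan-in j|, but moves the network
  output only by t |fan-in j| |fan-out j| times a constant depending on the widths of the
  later layers. Local minimality and properness (a nonzero fan-in) therefore bound
  |fan-out j| from below. The p-th powers of the fan-out norms of layer l sum to those of
  the fan-in norms of layer l + 1, which are at most d (l + 1) (B/lam)^p, so d l is bounded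
  in terms of d (l + 1); induction downwards from the output layer bounds all widths.\<close>

definition lp_norm :: "real \<Rightarrow> nat \<Rightarrow> (nat \<Rightarrow> real) \<Rightarrow> real" where
  "lp_norm p n u = (\<Sum>i<n. \<bar>u i\<bar> powr p) powr (1 / p)"

lemma lp_norm_nonneg: "0 \<le> lp_norm p n u"
  by (simp add: lp_norm_def)

lemma lp_norm_powr:
  assumes "p > 0"
  shows "lp_norm p n u powr p = (\<Sum>i<n. \<bar>u i\<bar> powr p)"
  using assms by (simp add: lp_norm_def powr_powr sum_nonneg)

lemma abs_le_lp_norm:
  assumes "p > 0" "i < n"
  shows "\<bar>u i\<bar> \<le> lp_norm p n u"
proof -
  have "\<bar>u i\<bar> = (\<bar>u i\<bar> powr p) powr (1 / p)"
    using assms by (simp add: powr_powr)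
  also have "\<dots> \<le> lp_norm p n u"
    unfolding lp_norm_def using assms
    by (intro powr_mono2) (auto intro!: member_le_sum)
  finally show ?thesis .
qed

lemma lp_norm_scale:
  assumes "p > 0" "0 \<le> c"
  shows "lp_norm p n (\<lambda>i. c * u i) = c * lp_norm p n u"
proof -
  have "(\<Sum>i<n. \<bar>c * u i\<bar> powr p) = c powr p * (\<Sum>i<n. \<bar>u i\<bar> powr p)"
    using assms by (simp add: abs_mult powr_mult sum_distrib_left)
  then show ?thesis
    using assms by (simp add: lp_norm_def powr_mult powr_powr sum_nonneg)
qed

lemma abs_sum_mult_le_lp_norm:
  assumes "p > 0"
  shows "\<bar>\<Sum>i<n. a i * u i\<bar> \<le> (\<Sum>i<n. \<bar>a i\<bar>) * lp_norm p n u"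
proof -
  have "\<bar>\<Sum>i<n. a i * u i\<bar> \<le> (\<Sum>i<n. \<bar>a i\<bar> * \<bar>u i\<bar>)"
    by (rule order_trans[OF sum_abs]) (simp add: abs_mult)
  also have "\<dots> \<le> (\<Sum>i<n. \<bar>a i\<bar> * lp_norm p n u)"
    using assms by (intro sum_mono mult_left_mono abs_le_lp_norm) auto
  finally show ?thesis
    by (simp add: sum_distrib_right)
qed

lemma sum_abs_le_lp_norm:
  assumes "p > 0"
  shows "(\<Sum>i<n. \<bar>u i\<bar>) \<le> real n * lp_norm p n u"
  using abs_sum_mult_le_lp_norm[OF assms, where a = "\<lambda>i. 1" and u = "\<lambda>i. \<bar>u i\<bar>" and n = n]
  by (simp add: lp_norm_def)

lemma sum_lp_norm_powr_rows:
  assumes "p > 0"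
  shows "(\<Sum>i<m. lp_norm p n (\<lambda>k. A i k) powr p) = (\<Sum>k<n. lp_norm p m (\<lambda>i. A i k) powr p)"
  using assms by (simp add: lp_norm_powr sum.swap[of _ "{..<m}"])

lemma row_count_powr_le:
  assumes "p > 0" "0 \<le> q"
    and rows: "\<And>j. j < n \<Longrightarrow> q \<le> lp_norm p m (\<lambda>k. A j k)"
    and cols: "\<And>k. k < m \<Longrightarrow> lp_norm p n (\<lambda>j. A j k) \<le> c"
  shows "real n * q powr p \<le> real m * c powr p"
proof -
  have "real n * q powr p = (\<Sum>j<n. q powr p)"
    by simp
  also have "\<dots> \<le> (\<Sum>j<n. lp_norm p m (\<lambda>k. A j k) powr p)"
    using assms by (intro sum_mono powr_mono2) auto
  also have "\<dots> = (\<Sum>k<m. lp_norm p n (\<lambda>j. A j k) powr p)"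
    by (rule sum_lp_norm_powr_rows[OF assms(1)])
  also have "\<dots> \<le> (\<Sum>k<m. c powr p)"
    using assms by (intro sum_mono powr_mono2) (auto simp: lp_norm_nonneg)
  also have "\<dots> = real m * c powr p"
    by simp
  finally show ?thesis .
qed

lemma mean_diff_le:
  fixes f g :: "'a \<Rightarrow> real"
  assumes "finite A" "\<And>a. a \<in> A \<Longrightarrow> f a - g a \<le> c" "0 \<le> c"
  shows "sum f A / real (card A) - sum g A / real (card A) \<le> c"
proof (cases "A = {}")
  case False
  have "sum f A / real (card A) - sum g A / real (card A) = (\<Sum>a\<in>A. f a - g a) / real (card A)"
    by (simp add: sum_subtractf diff_divide_distrib)
  also have "\<dots> \<le> (\<Sum>a\<in>A. c) / real (card A)"
    using assms by (intro divide_right_mono sum_mono) auto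
  also have "\<dots> = c"
    using False assms(1) by simp
  finally show ?thesis .
qed (use assms in simp)

lemma abs_diff_le_deriv_bound:
  fixes f :: "real \<Rightarrow> real"
  assumes "\<And>s. f differentiable (at s)" "\<And>s. \<bar>s\<bar> \<le> S \<Longrightarrow> \<bar>deriv f s\<bar> \<le> c"
    and "\<bar>a\<bar> \<le> S" "\<bar>b\<bar> \<le> S"
  shows "\<bar>f a - f b\<bar> \<le> c * \<bar>a - b\<bar>"
proof -
  have "norm (f a - f b) \<le> c * norm (a - b)"
  proof (rule field_differentiable_bound[of "{-S..S}"])
    show "(f has_field_derivative deriv f s) (at s within {-S..S})" for s
      using assms(1) DERIV_deriv_iff_real_differentiable has_field_derivative_at_within by blast
  qed (use assms in \<open>auto simp: abs_le_iff\<close>)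
  then show ?thesis
    by simp
qed

lemma norm_linear_le_axis_bound:
  fixes g :: "real ^ 'n \<Rightarrow> real"
  assumes "linear g" "\<And>k. \<bar>g (axis k 1)\<bar> \<le> c"
  shows "\<bar>g h\<bar> \<le> c * real CARD('n) * norm h"
proof -
  have "g h = g (\<Sum>k\<in>UNIV. h $ k *\<^sub>R axis k 1)"
    using basis_expansion[of h] by (simp add: scalar_mult_eq_scaleR)
  also have "\<dots> = (\<Sum>k\<in>UNIV. h $ k * g (axis k 1))"
    using assms(1) by (simp add: linear_sum linear_scale)
  also have "\<bar>\<dots>\<bar> \<le> (\<Sum>k\<in>(UNIV :: 'n set). norm h * c)"
    by (rule order_trans[OF sum_abs], rule sum_mono)
       (auto simp: abs_mult intro!: mult_mono component_le_norm_cart assms(2))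
  finally show ?thesis
    by (simp add: mult_ac)
qed

lemma eventually_at_right_0_lt_1: "eventually (\<lambda>t::real. 0 < t \<and> t < 1) (at_right 0)"
  unfolding eventually_at_right_field by (intro exI[of _ 1]) auto

lemma eventually_lipschitz_at_sublevel:
  fixes f :: "real ^ 'n \<Rightarrow> real"
  assumes diff: "\<And>u. f differentiable (at u)" and below: "f v < S"
    and partial: "\<And>u k. f u \<le> S \<Longrightarrow> \<bar>frechet_derivative f (at u) (axis k 1)\<bar> \<le> c"
  shows "eventually (\<lambda>w. \<bar>f w - f v\<bar> \<le> c * real CARD('n) * norm (w - v)) (nhds v)"
proof -
  have "continuous_on UNIV f"
    using diff by (meson continuous_at_imp_continuous_on differentiable_imp_continuous_within)
  then have "open {w. f w < S}"
    by (intro open_Collect_less continuous_on_const)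
  then obtain r where r: "r > 0" and sub: "ball v r \<subseteq> {w. f w < S}"
    using below open_contains_ball_eq by blast
  have "\<bar>f w - f v\<bar> \<le> c * real CARD('n) * norm (w - v)" if "w \<in> ball v r" for w
  proof -
    have "norm (f w - f v) \<le> (c * real CARD('n)) * norm (w - v)"
    proof (rule differentiable_bound[of "ball v r" f "\<lambda>u. frechet_derivative f (at u)"])
      fix u assume u: "u \<in> ball v r"
      have deriv: "(f has_derivative frechet_derivative f (at u)) (at u)"
        using diff frechet_derivative_works by blast
      then show "(f has_derivative frechet_derivative f (at u)) (at u within ball v r)"
        by (rule has_derivative_at_withinI)
      have "f u \<le> S"
        using sub u by auto
      then show "onorm (frechet_derivative f (at u)) \<le> c * real CARD('n)"
        using has_derivative_linear[OF deriv] partial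
        by (intro onorm_le) (simp add: norm_linear_le_axis_bound)
    qed (use r that in auto)
    then show ?thesis
      by simp
  qed
  then show ?thesis
    unfolding eventually_nhds_metric using r by (auto simp: dist_commute)
qed

lemma fin_enum_bij: "bij_betw (fin_enum :: nat \<Rightarrow> 'a::finite) {..<CARD('a)} UNIV"
proof -
  have "\<exists>g. bij_betw g {..<CARD('a)} (UNIV :: 'a set)"
    using ex_bij_betw_nat_finite[of "UNIV :: 'a set"] by (simp add: atLeast0LessThan)
  then show ?thesis
    unfolding fin_enum_def by (rule someI_ex)
qed

lemma net_diff_norm_le:
  "norm (net L \<sigma> d V x - net L \<sigma> d W x :: real ^ 'o::finite)
     \<le> (\<Sum>k<CARD('o). \<bar>layer \<sigma> d V x L k - layer \<sigma> d W x L k\<bar>)"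
proof -
  have bij: "bij_betw (inv_into {..<CARD('o)} (fin_enum :: nat \<Rightarrow> 'o)) UNIV {..<CARD('o)}"
    using bij_betw_inv_into[OF fin_enum_bij] .
  have "norm (net L \<sigma> d V x - net L \<sigma> d W x :: real ^ 'o)
      \<le> (\<Sum>k\<in>UNIV. \<bar>(net L \<sigma> d V x - net L \<sigma> d W x :: real ^ 'o) $ k\<bar>)"
    by (rule norm_le_l1_cart)
  also have "\<dots> = (\<Sum>k<CARD('o). \<bar>layer \<sigma> d V x L k - layer \<sigma> d W x L k\<bar>)"
    unfolding net_def using sum.reindex_bij_betw[OF bij] by (simp del: layer.simps)
  finally show ?thesis .
qed

lemma Omega_in_lp_norm:
  "Omega_in L d W lam p = lam * (\<Sum>l\<in>{1..L}. \<Sum>j<d l. lp_norm p (d (l - 1)) (\<lambda>i. W l i j))"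
  by (simp add: Omega_in_def lp_norm_def)

lemma Omega_in_nonneg: "0 \<le> lam \<Longrightarrow> 0 \<le> Omega_in L d W lam p"
  by (simp add: Omega_in_lp_norm sum_nonneg lp_norm_nonneg)

lemma Omega_in_le_E_err:
  assumes "\<And>v y. 0 \<le> e v y"
  shows "Omega_in L d W lam p \<le> E_err L \<sigma> e D lam p d W"
  using assms unfolding E_err_def
  by (auto intro!: divide_nonneg_nonneg sum_nonneg split: prod.split)

lemma error_le_card_mul_E_err:
  assumes "finite D" "(x, y) \<in> D" "\<And>v y. 0 \<le> e v y" "0 \<le> lam"
  shows "e (net L \<sigma> d W x) y \<le> real (card D) * E_err L \<sigma> e D lam p d W"
proof -
  have "card D > 0"
    using assms(1,2) card_gt_0_iff by blast
  have "e (net L \<sigma> d W x) y \<le> (\<Sum>(x, y)\<in>D. e (net L \<sigma> d W x) y)"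
    using member_le_sum[of "(x, y)" D "\<lambda>(x, y). e (net L \<sigma> d W x) y"] assms by auto
  also have "\<dots> \<le> real (card D) * E_err L \<sigma> e D lam p d W"
    using \<open>card D > 0\<close> Omega_in_nonneg[OF assms(4)] by (simp add: E_err_def field_simps)
  finally show ?thesis .
qed

definition shrink_fanin ::
    "(nat \<Rightarrow> nat \<Rightarrow> nat \<Rightarrow> real) \<Rightarrow> nat \<Rightarrow> nat \<Rightarrow> real \<Rightarrow> nat \<Rightarrow> nat \<Rightarrow> nat \<Rightarrow> real" where
  "shrink_fanin W l j t = W(l := (\<lambda>i k. if k = j then (1 - t) * W l i k else W l i k))"

lemma shrink_fanin_other_layer: "m \<noteq> l \<Longrightarrow> shrink_fanin W l j t m = W m"
  by (simp add: shrink_fanin_def)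

lemma lp_norm_shrink_fanin:
  assumes "p > 0" "0 \<le> t" "t \<le> 1"
  shows "lp_norm p n (\<lambda>i. shrink_fanin W l j t l' i k)
           = lp_norm p n (\<lambda>i. W l' i k) - (if l' = l \<and> k = j then t * lp_norm p n (\<lambda>i. W l i j) else 0)"
  using assms lp_norm_scale[of p "1 - t" n "\<lambda>i. W l i j"]
  by (auto simp: shrink_fanin_def algebra_simps)

lemma Omega_in_shrink_fanin:
  assumes "p > 0" "0 \<le> t" "t \<le> 1" "l \<in> {1..L}" "j < d l"
  shows "Omega_in L d (shrink_fanin W l j t) lam p
           = Omega_in L d W lam p - lam * (t * lp_norm p (d (l - 1)) (\<lambda>i. W l i j))"
proof -
  have "(\<Sum>k<d l'. if l' = l \<and> k = j then c else 0) = (if l' = l then c else 0)" for l' and c :: real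
    using assms(5) by (cases "l' = l") auto
  then show ?thesis
    unfolding Omega_in_lp_norm lp_norm_shrink_fanin[OF assms(1-3)] sum_subtractf
    using assms(4) by (simp add: right_diff_distrib)
qed

lemma layer_shrink_fanin_below: "m < l \<Longrightarrow> layer \<sigma> d (shrink_fanin W l j t) x m = layer \<sigma> d W x m"
  by (induction m) (simp_all add: shrink_fanin_other_layer)

lemma layer_shrink_fanin_at:
  "layer \<sigma> d (shrink_fanin W (Suc l) j t) x (Suc l) k =
     (if k = j then \<sigma> (Suc l) ((1 - t) * (\<Sum>i<d l. layer \<sigma> d W x l i * W (Suc l) i j))
      else layer \<sigma> d W x (Suc l) k)"
proof -
  have "layer \<sigma> d (shrink_fanin W (Suc l) j t) x l = layer \<sigma> d W x l"
    by (rule layer_shrink_fanin_below) simp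
  then show ?thesis
    by (simp only: layer.simps(2)) (simp add: shrink_fanin_def sum_distrib_left mult_ac)
qed

locale regularized_net =
  fixes L :: nat and \<sigma> :: "nat \<Rightarrow> real \<Rightarrow> real"
    and e :: "real ^ 'o::finite \<Rightarrow> 'y \<Rightarrow> real"
    and D :: "((real ^ 'i::finite) \<times> 'y) set"
    and lam p B :: real and b1 b2 :: "nat \<Rightarrow> real \<Rightarrow> real" and b3 :: "real \<Rightarrow> real"
  assumes D: "finite D"
    and sigma_diff: "\<And>l s. l \<in> {1..L} \<Longrightarrow> \<sigma> l differentiable (at s)"
    and b1: "\<And>l S s. l \<in> {1..L} \<Longrightarrow> \<bar>s\<bar> \<le> S \<Longrightarrow> \<bar>\<sigma> l s\<bar> \<le> b1 l S * \<bar>s\<bar>"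
    and b2: "\<And>l S s. l \<in> {1..L} \<Longrightarrow> \<bar>s\<bar> \<le> S \<Longrightarrow> \<bar>deriv (\<sigma> l) s\<bar> \<le> b2 l S"
    and b2_nonneg: "\<And>l S. l \<in> {1..L} \<Longrightarrow> 0 \<le> S \<Longrightarrow> 0 \<le> b2 l S"
    and e_nonneg: "\<And>v y. 0 \<le> e v y"
    and e_diff: "\<And>v y. (\<lambda>u. e u y) differentiable (at v)"
    and b3: "\<And>S v y k. e v y \<le> S \<Longrightarrow> \<bar>frechet_derivative (\<lambda>u. e u y) (at v) (axis k 1)\<bar> \<le> b3 S"
    and b3_nonneg: "\<And>S. 0 \<le> S \<Longrightarrow> 0 \<le> b3 S"
    and lam: "lam > 0"
    and p_pos: "0 < p"
    and B: "0 \<le> B"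
begin

definition budget :: real where
  "budget = B / lam"

lemma budget_nonneg: "0 \<le> budget"
  using B lam by (simp add: budget_def)

definition budgeted :: "(nat \<Rightarrow> nat) \<Rightarrow> (nat \<Rightarrow> nat \<Rightarrow> nat \<Rightarrow> real) \<Rightarrow> bool" where
  "budgeted d W \<longleftrightarrow> (\<forall>l\<in>{1..L}. (\<Sum>j<d l. lp_norm p (d (l - 1)) (\<lambda>i. W l i j)) \<le> budget)"

lemma fanin_le_budget:
  assumes "budgeted d W" "l \<in> {1..L}" "j < d l"
  shows "lp_norm p (d (l - 1)) (\<lambda>i. W l i j) \<le> budget"
proof -
  have "lp_norm p (d (l - 1)) (\<lambda>i. W l i j) \<le> (\<Sum>j<d l. lp_norm p (d (l - 1)) (\<lambda>i. W l i j))"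
    using assms(3) by (intro member_le_sum) (auto simp: lp_norm_nonneg)
  then show ?thesis
    using assms(1,2) unfolding budgeted_def by fastforce
qed

lemma abs_weight_le_budget:
  "budgeted d W \<Longrightarrow> l \<in> {1..L} \<Longrightarrow> j < d l \<Longrightarrow> i < d (l - 1) \<Longrightarrow> \<bar>W l i j\<bar> \<le> budget"
  using abs_le_lp_norm[OF p_pos] fanin_le_budget by (meson order_trans)

lemma budgeted_shrink_fanin:
  assumes "budgeted d W" "0 \<le> t" "t \<le> 1"
  shows "budgeted d (shrink_fanin W l j t)"
  unfolding budgeted_def
proof
  fix l' assume l': "l' \<in> {1..L}"
  have "(\<Sum>k<d l'. lp_norm p (d (l' - 1)) (\<lambda>i. shrink_fanin W l j t l' i k))
      \<le> (\<Sum>k<d l'. lp_norm p (d (l' - 1)) (\<lambda>i. W l' i k))"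
    using assms(2,3) by (intro sum_mono) (simp add: lp_norm_shrink_fanin[OF p_pos] lp_norm_nonneg)
  also have "\<dots> \<le> budget"
    using assms(1) l' unfolding budgeted_def by blast
  finally show "(\<Sum>k<d l'. lp_norm p (d (l' - 1)) (\<lambda>i. shrink_fanin W l j t l' i k)) \<le> budget" .
qed

primrec act_bound :: "nat \<Rightarrow> real" where
  "act_bound 0 = (\<Sum>(x, y)\<in>D. \<Sum>i<CARD('i). \<bar>x $ (fin_enum i :: 'i)\<bar>)"
| "act_bound (Suc m) = \<bar>b1 (Suc m) (act_bound m * budget)\<bar> * act_bound m * budget"

lemma act_bound_nonneg: "0 \<le> act_bound m"
  by (induction m) (auto simp: split_def budget_nonneg intro!: sum_nonneg)

lemma sum_abs_layer_le:
  assumes W: "budgeted d W" and d0: "d 0 = CARD('i)" and xy: "(x, y) \<in> D"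
  shows "m \<le> L \<Longrightarrow> (\<Sum>j<d m. \<bar>layer \<sigma> d W x m j\<bar>) \<le> act_bound m"
proof (induction m)
  case 0
  show ?case
    using member_le_sum[of "(x, y)" D "\<lambda>(x, y). \<Sum>i<CARD('i). \<bar>x $ (fin_enum i :: 'i)\<bar>"] D xy d0
    by (auto intro!: sum_nonneg)
next
  case (Suc m)
  let ?S = "act_bound m * budget" and ?c = "\<bar>b1 (Suc m) (act_bound m * budget)\<bar>"
  let ?N = "\<lambda>j. lp_norm p (d m) (\<lambda>i. W (Suc m) i j)"
  have l: "Suc m \<in> {1..L}"
    using Suc by simp
  have z: "\<bar>\<Sum>i<d m. layer \<sigma> d W x m i * W (Suc m) i j\<bar> \<le> act_bound m * ?N j" for j
    using abs_sum_mult_le_lp_norm[OF p_pos] Suc act_bound_nonneg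
    by (meson Suc_leD lp_norm_nonneg mult_right_mono order_trans)
  have "\<bar>layer \<sigma> d W x (Suc m) j\<bar> \<le> ?c * (act_bound m * ?N j)" if "j < d (Suc m)" for j
  proof -
    have "act_bound m * ?N j \<le> ?S"
      using fanin_le_budget[OF W l that] act_bound_nonneg by (simp add: mult_left_mono)
    then have "\<bar>layer \<sigma> d W x (Suc m) j\<bar> \<le> b1 (Suc m) ?S * \<bar>\<Sum>i<d m. layer \<sigma> d W x m i * W (Suc m) i j\<bar>"
      using b1[OF l] z[of j] by simp
    also have "\<dots> \<le> ?c * (act_bound m * ?N j)"
      by (rule mult_mono[OF abs_ge_self z]) auto
    finally show ?thesis .
  qed
  then have "(\<Sum>j<d (Suc m). \<bar>layer \<sigma> d W x (Suc m) j\<bar>) \<le> (\<Sum>j<d (Suc m). ?c * (act_bound m * ?N j))"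
    by (intro sum_mono) (simp del: layer.simps)
  also have "\<dots> = ?c * act_bound m * (\<Sum>j<d (Suc m). ?N j)"
    by (simp add: sum_distrib_left mult_ac)
  also have "\<dots> \<le> ?c * act_bound m * budget"
  proof -
    have "(\<Sum>j<d (Suc m). ?N j) \<le> budget"
      using W l unfolding budgeted_def by (metis diff_Suc_1)
    then show ?thesis
      using act_bound_nonneg by (simp add: mult_left_mono)
  qed
  finally show ?case
    by simp
qed

lemma abs_preact_le:
  assumes "budgeted d W" "d 0 = CARD('i)" "(x, y) \<in> D" "Suc m \<le> L"
  shows "\<bar>\<Sum>i<d m. layer \<sigma> d W x m i * W (Suc m) i j\<bar> \<le> act_bound m * lp_norm p (d m) (\<lambda>i. W (Suc m) i j)"
  using abs_sum_mult_le_lp_norm[OF p_pos] sum_abs_layer_le[OF assms(1-3)] assms(4)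
  by (meson Suc_leD lp_norm_nonneg mult_right_mono order_trans)

lemma abs_preact_le_budget:
  assumes "budgeted d W" "d 0 = CARD('i)" "(x, y) \<in> D" "Suc m \<le> L" "j < d (Suc m)"
  shows "\<bar>\<Sum>i<d m. layer \<sigma> d W x m i * W (Suc m) i j\<bar> \<le> act_bound m * budget"
proof -
  have "lp_norm p (d m) (\<lambda>i. W (Suc m) i j) \<le> budget"
    using fanin_le_budget[OF assms(1) _ assms(5)] assms(4) by simp
  then show ?thesis
    using abs_preact_le[OF assms(1-4)] act_bound_nonneg by (meson mult_left_mono order_trans)
qed

lemma sigma_lipschitz:
  "l \<in> {1..L} \<Longrightarrow> 0 \<le> S \<Longrightarrow> \<bar>a\<bar> \<le> S \<Longrightarrow> \<bar>b\<bar> \<le> S \<Longrightarrow> \<bar>\<sigma> l a - \<sigma> l b\<bar> \<le> b2 l S * \<bar>a - b\<bar>"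
  using abs_diff_le_deriv_bound[of "\<sigma> l" S "b2 l S" a b] sigma_diff b2 by blast

definition act_lip :: "nat \<Rightarrow> real" where
  "act_lip m = b2 m (act_bound (m - 1) * budget)"

lemma act_lip_nonneg: "m \<in> {1..L} \<Longrightarrow> 0 \<le> act_lip m"
  unfolding act_lip_def using b2_nonneg act_bound_nonneg budget_nonneg by simp

lemma sum_abs_layer_diff_Suc_le:
  assumes V: "budgeted d V" and W: "budgeted d W" and d0: "d 0 = CARD('i)" and xy: "(x, y) \<in> D"
    and m: "Suc m \<le> L" and same: "V (Suc m) = W (Suc m)"
  shows "(\<Sum>k<d (Suc m). \<bar>layer \<sigma> d V x (Suc m) k - layer \<sigma> d W x (Suc m) k\<bar>)
     \<le> act_lip (Suc m) * (\<Sum>i<d m. \<bar>layer \<sigma> d V x m i - layer \<sigma> d W x m i\<bar>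
                                   * (\<Sum>k<d (Suc m). \<bar>W (Suc m) i k\<bar>))"
proof -
  let ?\<Delta> = "\<lambda>i. layer \<sigma> d V x m i - layer \<sigma> d W x m i"
  have lm: "Suc m \<in> {1..L}"
    using m by simp
  have "\<bar>layer \<sigma> d V x (Suc m) k - layer \<sigma> d W x (Suc m) k\<bar>
      \<le> act_lip (Suc m) * (\<Sum>i<d m. \<bar>?\<Delta> i\<bar> * \<bar>W (Suc m) i k\<bar>)" if k: "k < d (Suc m)" for k
  proof -
    have zV: "\<bar>\<Sum>i<d m. layer \<sigma> d V x m i * W (Suc m) i k\<bar> \<le> act_bound m * budget"
      using abs_preact_le_budget[OF V d0 xy m k] same by simp
    have zW: "\<bar>\<Sum>i<d m. layer \<sigma> d W x m i * W (Suc m) i k\<bar> \<le> act_bound m * budget"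
      using abs_preact_le_budget[OF W d0 xy m k] .
    have "\<bar>layer \<sigma> d V x (Suc m) k - layer \<sigma> d W x (Suc m) k\<bar>
        \<le> act_lip (Suc m) * \<bar>\<Sum>i<d m. ?\<Delta> i * W (Suc m) i k\<bar>"
      using sigma_lipschitz[OF lm _ zV zW] same act_bound_nonneg budget_nonneg
      by (simp add: act_lip_def sum_subtractf left_diff_distrib)
    also have "\<dots> \<le> act_lip (Suc m) * (\<Sum>i<d m. \<bar>?\<Delta> i\<bar> * \<bar>W (Suc m) i k\<bar>)"
      using act_lip_nonneg[OF lm] by (intro mult_left_mono order_trans[OF sum_abs]) (auto simp: abs_mult)
    finally show ?thesis .
  qed
  then have "(\<Sum>k<d (Suc m). \<bar>layer \<sigma> d V x (Suc m) k - layer \<sigma> d W x (Suc m) k\<bar>)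
      \<le> (\<Sum>k<d (Suc m). act_lip (Suc m) * (\<Sum>i<d m. \<bar>?\<Delta> i\<bar> * \<bar>W (Suc m) i k\<bar>))"
    by (intro sum_mono) (simp del: layer.simps)
  also have "\<dots> = act_lip (Suc m) * (\<Sum>i<d m. \<bar>?\<Delta> i\<bar> * (\<Sum>k<d (Suc m). \<bar>W (Suc m) i k\<bar>))"
    by (simp add: sum_distrib_left sum.swap[of _ "{..<d (Suc m)}"] del: layer.simps)
  finally show ?thesis .
qed

definition growth :: "nat \<Rightarrow> real" where
  "growth M = 1 + (\<Sum>m\<in>{1..L}. act_lip m) * (1 + real M * budget)"

lemma growth_ge:
  assumes "m \<in> {1..L}"
  shows "1 \<le> growth M" "act_lip m \<le> growth M" "act_lip m * (real M * budget) \<le> growth M"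
proof -
  let ?s = "\<Sum>m\<in>{1..L}. act_lip m"
  have s: "act_lip m \<le> ?s" "0 \<le> ?s"
    using assms act_lip_nonneg by (auto intro: member_le_sum sum_nonneg)
  have MC: "0 \<le> real M * budget"
    using budget_nonneg by simp
  have "?s * (1 + real M * budget) = ?s + ?s * (real M * budget)"
    by (simp add: distrib_left)
  moreover have "act_lip m * (real M * budget) \<le> ?s * (real M * budget)"
    using s(1) MC by (rule mult_right_mono)
  moreover have "0 \<le> ?s * (real M * budget)"
    using s MC by simp
  ultimately show "1 \<le> growth M" "act_lip m \<le> growth M" "act_lip m * (real M * budget) \<le> growth M"
    unfolding growth_def using s by linarith+
qed

lemma sum_abs_row_le_budget:
  assumes "budgeted d W" "m \<in> {1..L}" "i < d (m - 1)"
  shows "(\<Sum>k<d m. \<bar>W m i k\<bar>) \<le> real (d m) * budget"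
proof -
  have "(\<Sum>k<d m. \<bar>W m i k\<bar>) \<le> (\<Sum>k<d m. budget)"
    using abs_weight_le_budget[OF assms(1,2)] assms(3) by (intro sum_mono) simp
  then show ?thesis
    by simp
qed

lemma sum_abs_layer_diff_unit_le:
  assumes V: "budgeted d V" and W: "budgeted d W" and d0: "d 0 = CARD('i)" and xy: "(x, y) \<in> D"
    and same: "V (Suc (Suc l)) = W (Suc (Suc l))"
    and unit: "\<And>i. i \<noteq> j \<Longrightarrow> layer \<sigma> d V x (Suc l) i = layer \<sigma> d W x (Suc l) i"
    and j: "j < d (Suc l)" and l: "Suc (Suc l) \<le> L"
  shows "(\<Sum>k<d (Suc (Suc l)). \<bar>layer \<sigma> d V x (Suc (Suc l)) k - layer \<sigma> d W x (Suc (Suc l)) k\<bar>)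
     \<le> act_lip (Suc (Suc l)) * (\<bar>layer \<sigma> d V x (Suc l) j - layer \<sigma> d W x (Suc l) j\<bar>
                                   * (\<Sum>k<d (Suc (Suc l)). \<bar>W (Suc (Suc l)) j k\<bar>))"
proof -
  let ?\<Delta> = "\<lambda>i. \<bar>layer \<sigma> d V x (Suc l) i - layer \<sigma> d W x (Suc l) i\<bar>"
  let ?row = "\<lambda>i. \<Sum>k<d (Suc (Suc l)). \<bar>W (Suc (Suc l)) i k\<bar>"
  have "(\<Sum>i<d (Suc l). ?\<Delta> i * ?row i) = (\<Sum>i<d (Suc l). if i = j then ?\<Delta> j * ?row j else 0)"
    using unit by (intro sum.cong) auto
  also have "\<dots> = ?\<Delta> j * ?row j"
    using j by simp
  finally show ?thesis
    using sum_abs_layer_diff_Suc_le[OF V W d0 xy l same] by (simp del: layer.simps)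
qed

lemma sum_abs_layer_diff_le:
  assumes V: "budgeted d V" and W: "budgeted d W" and d0: "d 0 = CARD('i)" and xy: "(x, y) \<in> D"
    and above: "\<And>m. Suc l < m \<Longrightarrow> V m = W m"
    and unit: "\<And>i. i \<noteq> j \<Longrightarrow> layer \<sigma> d V x (Suc l) i = layer \<sigma> d W x (Suc l) i"
    and j: "j < d (Suc l)" and widths: "\<And>m. Suc l < m \<Longrightarrow> m \<le> L \<Longrightarrow> d m \<le> M"
    and m: "Suc (Suc l) \<le> m" "m \<le> L"
  shows "(\<Sum>k<d m. \<bar>layer \<sigma> d V x m k - layer \<sigma> d W x m k\<bar>)
     \<le> \<bar>layer \<sigma> d V x (Suc l) j - layer \<sigma> d W x (Suc l) j\<bar>
        * (\<Sum>k<d (Suc (Suc l)). \<bar>W (Suc (Suc l)) j k\<bar>) * growth M ^ (m - Suc l)"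
  using m(1)
proof (induction m rule: dec_induct)
  case base
  let ?X = "\<bar>layer \<sigma> d V x (Suc l) j - layer \<sigma> d W x (Suc l) j\<bar>
        * (\<Sum>k<d (Suc (Suc l)). \<bar>W (Suc (Suc l)) j k\<bar>)"
  have "(\<Sum>k<d (Suc (Suc l)). \<bar>layer \<sigma> d V x (Suc (Suc l)) k - layer \<sigma> d W x (Suc (Suc l)) k\<bar>)
      \<le> act_lip (Suc (Suc l)) * ?X"
    using sum_abs_layer_diff_unit_le[OF V W d0 xy above unit j] m by simp
  also have "\<dots> \<le> growth M * ?X"
    using growth_ge(2) m by (intro mult_right_mono) (auto intro: sum_nonneg)
  finally show ?case
    by (simp add: mult_ac)
next
  case (step n)
  let ?\<Delta> = "\<lambda>i. \<bar>layer \<sigma> d V x n i - layer \<sigma> d W x n i\<bar>"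
  let ?X = "\<bar>layer \<sigma> d V x (Suc l) j - layer \<sigma> d W x (Suc l) j\<bar>
        * (\<Sum>k<d (Suc (Suc l)). \<bar>W (Suc (Suc l)) j k\<bar>)"
  have ln: "Suc n \<in> {1..L}" and n: "Suc n \<le> L" and above_n: "Suc l < Suc n"
    using step m by auto
  have row: "(\<Sum>k<d (Suc n). \<bar>W (Suc n) i k\<bar>) \<le> real M * budget" if "i < d n" for i
  proof -
    have "(\<Sum>k<d (Suc n). \<bar>W (Suc n) i k\<bar>) \<le> real (d (Suc n)) * budget"
      using sum_abs_row_le_budget[OF W ln] that by simp
    also have "\<dots> \<le> real M * budget"
      using widths[OF above_n n] budget_nonneg by (simp add: mult_right_mono)
    finally show ?thesis .
  qed
  have "(\<Sum>k<d (Suc n). \<bar>layer \<sigma> d V x (Suc n) k - layer \<sigma> d W x (Suc n) k\<bar>)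
      \<le> act_lip (Suc n) * (\<Sum>i<d n. ?\<Delta> i * (\<Sum>k<d (Suc n). \<bar>W (Suc n) i k\<bar>))"
    using above_n by (rule sum_abs_layer_diff_Suc_le[OF V W d0 xy n above])
  also have "\<dots> \<le> act_lip (Suc n) * (\<Sum>i<d n. ?\<Delta> i * (real M * budget))"
    using row act_lip_nonneg[OF ln] by (intro mult_left_mono sum_mono) auto
  also have "\<dots> = act_lip (Suc n) * (real M * budget) * (\<Sum>i<d n. ?\<Delta> i)"
    by (simp add: sum_distrib_left mult_ac del: layer.simps)
  also have "\<dots> \<le> growth M * (?X * growth M ^ (n - Suc l))"
    using step growth_ge[OF ln, of M] by (intro mult_mono) (auto intro: sum_nonneg)
  also have "\<dots> = ?X * growth M ^ (Suc n - Suc l)"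
  proof -
    have "Suc n - Suc l = Suc (n - Suc l)"
      using step by simp
    then show ?thesis
      by (simp only: power_Suc mult_ac)
  qed
  finally show ?case .
qed

lemma abs_layer_shrink_fanin_diff_le:
  assumes W: "budgeted d W" and d0: "d 0 = CARD('i)" and xy: "(x, y) \<in> D"
    and t: "0 \<le> t" "t \<le> 1" and l: "Suc l \<le> L" and j: "j < d (Suc l)"
  shows "\<bar>layer \<sigma> d (shrink_fanin W (Suc l) j t) x (Suc l) j - layer \<sigma> d W x (Suc l) j\<bar>
           \<le> act_lip (Suc l) * (t * (act_bound l * lp_norm p (d l) (\<lambda>i. W (Suc l) i j)))"
proof -
  let ?z = "\<Sum>i<d l. layer \<sigma> d W x l i * W (Suc l) i j"
  have z: "\<bar>?z\<bar> \<le> act_bound l * budget"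
    by (rule abs_preact_le_budget[OF W d0 xy l j])
  have "\<bar>(1 - t) * ?z\<bar> \<le> \<bar>?z\<bar>"
    using t by (simp add: abs_mult mult_left_le_one_le)
  then have "\<bar>\<sigma> (Suc l) ((1 - t) * ?z) - \<sigma> (Suc l) ?z\<bar> \<le> act_lip (Suc l) * \<bar>(1 - t) * ?z - ?z\<bar>"
    unfolding act_lip_def using sigma_lipschitz z l act_bound_nonneg budget_nonneg by simp
  also have "\<dots> = act_lip (Suc l) * (t * \<bar>?z\<bar>)"
    using t by (simp add: algebra_simps abs_mult)
  also have "\<dots> \<le> act_lip (Suc l) * (t * (act_bound l * lp_norm p (d l) (\<lambda>i. W (Suc l) i j)))"
    using abs_preact_le[OF W d0 xy l] act_lip_nonneg l t by (intro mult_left_mono) auto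
  finally show ?thesis
    unfolding layer_shrink_fanin_at by simp
qed

definition shrink_gain :: "nat \<Rightarrow> nat \<Rightarrow> real" where
  "shrink_gain M l = act_lip (Suc l) * act_bound l * real M * growth M ^ L"

lemma net_shrink_fanin_diff_le:
  assumes W: "budgeted d W" and d0: "d 0 = CARD('i)" and dL: "d L = CARD('o)" and xy: "(x, y) \<in> D"
    and t: "0 \<le> t" "t \<le> 1" and l: "Suc l < L" and j: "j < d (Suc l)"
    and widths: "\<And>m. Suc l < m \<Longrightarrow> m \<le> L \<Longrightarrow> d m \<le> M"
  shows "norm (net L \<sigma> d (shrink_fanin W (Suc l) j t) x - net L \<sigma> d W x :: real ^ 'o)
     \<le> t * lp_norm p (d l) (\<lambda>i. W (Suc l) i j)
         * lp_norm p (d (Suc (Suc l))) (\<lambda>k. W (Suc (Suc l)) j k) * shrink_gain M l"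
proof -
  let ?V = "shrink_fanin W (Suc l) j t"
  let ?\<Delta> = "\<bar>layer \<sigma> d ?V x (Suc l) j - layer \<sigma> d W x (Suc l) j\<bar>"
  let ?row = "\<Sum>k<d (Suc (Suc l)). \<bar>W (Suc (Suc l)) j k\<bar>"
  let ?fanin = "lp_norm p (d l) (\<lambda>i. W (Suc l) i j)"
  let ?fanout = "lp_norm p (d (Suc (Suc l))) (\<lambda>k. W (Suc (Suc l)) j k)"
  have g: "1 \<le> growth M"
    using growth_ge(1)[of 1] l by simp
  have above: "\<And>m. Suc l < m \<Longrightarrow> ?V m = W m"
    by (simp add: shrink_fanin_other_layer)
  have unit: "\<And>i. i \<noteq> j \<Longrightarrow> layer \<sigma> d ?V x (Suc l) i = layer \<sigma> d W x (Suc l) i"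
    by (simp add: layer_shrink_fanin_at del: layer.simps)
  have \<Delta>: "?\<Delta> \<le> act_lip (Suc l) * (t * (act_bound l * ?fanin))"
    using abs_layer_shrink_fanin_diff_le[OF W d0 xy t _ j] l by simp
  have "?row \<le> real (d (Suc (Suc l))) * ?fanout"
    by (rule sum_abs_le_lp_norm[OF p_pos])
  also have "\<dots> \<le> real M * ?fanout"
    using widths[of "Suc (Suc l)"] l by (intro mult_right_mono) (auto simp: lp_norm_nonneg)
  finally have row: "?row \<le> real M * ?fanout" .
  have "norm (net L \<sigma> d ?V x - net L \<sigma> d W x :: real ^ 'o) \<le> (\<Sum>k<d L. \<bar>layer \<sigma> d ?V x L k - layer \<sigma> d W x L k\<bar>)"
    unfolding dL by (rule net_diff_norm_le)
  also have "\<dots> \<le> ?\<Delta> * ?row * growth M ^ (L - Suc l)"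
    using l by (intro sum_abs_layer_diff_le[OF budgeted_shrink_fanin[OF W t] W d0 xy above unit j widths]) auto
  also have "\<dots> \<le> ?\<Delta> * ?row * growth M ^ L"
    using g by (intro mult_left_mono power_increasing) (auto intro: sum_nonneg)
  also have "\<dots> \<le> (act_lip (Suc l) * (t * (act_bound l * ?fanin))) * (real M * ?fanout) * growth M ^ L"
    using g by (intro mult_right_mono mult_mono[OF \<Delta> row]) (auto intro: order_trans[OF abs_ge_zero \<Delta>])
  also have "\<dots> = t * ?fanin * ?fanout * shrink_gain M l"
    by (simp add: shrink_gain_def mult_ac)
  finally show ?thesis .
qed

definition proper_local_min :: "(nat \<Rightarrow> nat) \<Rightarrow> (nat \<Rightarrow> nat \<Rightarrow> nat \<Rightarrow> real) \<Rightarrow> bool" where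
  "proper_local_min d W \<longleftrightarrow> d 0 = CARD('i) \<and> d L = CARD('o) \<and>
     local_min L d (E_err L \<sigma> e D lam p d) W \<and> E_err L \<sigma> e D lam p d W \<le> B \<and> proper L d W"

lemma proper_local_min_budgeted:
  assumes "proper_local_min d W"
  shows "budgeted d W"
proof -
  let ?T = "\<lambda>l. \<Sum>j<d l. lp_norm p (d (l - 1)) (\<lambda>i. W l i j)"
  have "Omega_in L d W lam p \<le> B"
    using Omega_in_le_E_err[of e] e_nonneg assms unfolding proper_local_min_def by (meson order_trans)
  then have "lam * (\<Sum>l\<in>{1..L}. ?T l) \<le> B"
    by (simp add: Omega_in_lp_norm)
  then have total: "(\<Sum>l\<in>{1..L}. ?T l) \<le> budget"
    using lam by (simp add: budget_def pos_le_divide_eq mult.commute)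
  show ?thesis
    unfolding budgeted_def
  proof
    fix l assume "l \<in> {1..L}"
    then have "?T l \<le> (\<Sum>l\<in>{1..L}. ?T l)"
      by (intro member_le_sum) (auto intro!: sum_nonneg simp: lp_norm_nonneg)
    then show "?T l \<le> budget"
      using total by simp
  qed
qed

definition error_level :: real where
  "error_level = real (card D) * B + 1"

lemma error_lt_error_level:
  assumes "proper_local_min d W" "(x, y) \<in> D"
  shows "e (net L \<sigma> d W x) y < error_level"
proof -
  have "e (net L \<sigma> d W x) y \<le> real (card D) * E_err L \<sigma> e D lam p d W"
    using error_le_card_mul_E_err[of D x y e lam] D assms(2) e_nonneg lam by simp
  also have "\<dots> \<le> real (card D) * B"
    using assms(1) by (simp add: proper_local_min_def mult_left_mono)
  finally show ?thesis
    by (simp add: error_level_def)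
qed

abbreviation mean_err :: "(nat \<Rightarrow> nat) \<Rightarrow> (nat \<Rightarrow> nat \<Rightarrow> nat \<Rightarrow> real) \<Rightarrow> real" where
  "mean_err d W \<equiv> (\<Sum>(x, y)\<in>D. e (net L \<sigma> d W x) y) / real (card D)"

lemma eventually_error_diff_le:
  assumes W: "proper_local_min d W" and xy: "(x, y) \<in> D" and A: "0 \<le> A"
    and close: "\<And>t. 0 < t \<Longrightarrow> t < 1 \<Longrightarrow> norm (net L \<sigma> d (V t) x - net L \<sigma> d W x :: real ^ 'o) \<le> t * A"
  shows "eventually (\<lambda>t. e (net L \<sigma> d (V t) x) y - e (net L \<sigma> d W x) y
                         \<le> b3 error_level * real CARD('o) * (t * A)) (at_right 0)"
proof -
  let ?v = "net L \<sigma> d W x :: real ^ 'o"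
  let ?c = "b3 error_level * real CARD('o)"
  have lip: "eventually (\<lambda>w. \<bar>e w y - e ?v y\<bar> \<le> ?c * norm (w - ?v)) (nhds ?v)"
    by (rule eventually_lipschitz_at_sublevel[where f = "\<lambda>u. e u y"])
       (use e_diff error_lt_error_level[OF W xy] b3 in auto)
  have small: "eventually (\<lambda>t. norm (net L \<sigma> d (V t) x - ?v) \<le> t * A) (at_right 0)"
    using eventually_at_right_0_lt_1 by (rule eventually_mono) (simp add: close)
  have "((\<lambda>t. t * A) \<longlongrightarrow> 0 * A) (at_right 0)"
    by (intro tendsto_mult tendsto_ident_at tendsto_const)
  then have "((\<lambda>t. net L \<sigma> d (V t) x - ?v) \<longlongrightarrow> 0) (at_right 0)"
    by (intro Lim_null_comparison[OF small]) simp
  then have "((\<lambda>t. net L \<sigma> d (V t) x) \<longlongrightarrow> ?v) (at_right 0)"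
    by (rule LIM_zero_cancel)
  then have "eventually (\<lambda>t. \<bar>e (net L \<sigma> d (V t) x) y - e ?v y\<bar> \<le> ?c * norm (net L \<sigma> d (V t) x - ?v)) (at_right 0)"
    using lip by (rule filterlim_iff[THEN iffD1, rule_format])
  then show ?thesis
    using small
  proof eventually_elim
    case (elim t)
    have "0 \<le> ?c"
      using b3_nonneg[of error_level] e_nonneg[of ?v y] error_lt_error_level[OF W xy] by simp
    with elim(2) have "?c * norm (net L \<sigma> d (V t) x - ?v) \<le> ?c * (t * A)"
      by (rule mult_left_mono)
    then show ?case
      using elim(1) by linarith
  qed
qed

lemma eventually_mean_err_diff_le:
  assumes W: "proper_local_min d W" and A: "0 \<le> A"
    and close: "\<And>t x y. 0 < t \<Longrightarrow> t < 1 \<Longrightarrow> (x, y) \<in> D \<Longrightarrow>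
                  norm (net L \<sigma> d (V t) x - net L \<sigma> d W x :: real ^ 'o) \<le> t * A"
  shows "eventually (\<lambda>t. mean_err d (V t) - mean_err d W \<le> b3 error_level * real CARD('o) * (t * A)) (at_right 0)"
proof -
  have "eventually (\<lambda>t. \<forall>(x, y)\<in>D. e (net L \<sigma> d (V t) x) y - e (net L \<sigma> d W x) y
                         \<le> b3 error_level * real CARD('o) * (t * A)) (at_right 0)"
  proof (rule eventually_ball_finite[OF D], rule ballI)
    fix xy assume "xy \<in> D"
    then show "eventually (\<lambda>t. case xy of (x, y) \<Rightarrow> e (net L \<sigma> d (V t) x) y - e (net L \<sigma> d W x) y
                         \<le> b3 error_level * real CARD('o) * (t * A)) (at_right 0)"
      using eventually_error_diff_le[OF W _ A close] by (cases xy) simp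
  qed
  moreover have "eventually (\<lambda>t. 0 < t) (at_right (0::real))"
    by (rule eventually_at_right_less)
  ultimately show ?thesis
  proof eventually_elim
    case (elim t)
    have "0 \<le> b3 error_level"
      using b3_nonneg B by (simp add: error_level_def)
    then show ?case
      using elim A by (intro mean_diff_le[OF D]) auto
  qed
qed

lemma eventually_local_min_shrink_fanin:
  assumes W: "proper_local_min d W" and l: "l \<in> {1..L}" and j: "j < d l"
  shows "eventually (\<lambda>t. E_err L \<sigma> e D lam p d W \<le> E_err L \<sigma> e D lam p d (shrink_fanin W l j t)) (at_right 0)"
proof -
  obtain \<epsilon> where "\<epsilon> > 0" and min: "\<And>W'. (\<forall>l\<in>{1..L}. \<forall>i<d (l - 1). \<forall>j<d l. \<bar>W' l i j - W l i j\<bar> < \<epsilon>)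
      \<Longrightarrow> E_err L \<sigma> e D lam p d W \<le> E_err L \<sigma> e D lam p d W'"
    using W unfolding proper_local_min_def local_min_def by blast
  have "((\<lambda>t. t * budget) \<longlongrightarrow> 0 * budget) (at_right 0)"
    by (intro tendsto_mult tendsto_ident_at tendsto_const)
  then have "eventually (\<lambda>t. t * budget < \<epsilon>) (at_right 0)"
    using \<open>\<epsilon> > 0\<close> by (intro order_tendstoD(2)) auto
  then show ?thesis
    using eventually_at_right_0_lt_1
  proof eventually_elim
    case (elim t)
    have "\<bar>shrink_fanin W l j t l' i k - W l' i k\<bar> < \<epsilon>"
      if "l' \<in> {1..L}" "i < d (l' - 1)" "k < d l'" for l' i k
    proof (cases "l' = l \<and> k = j")
      case True
      then have "\<bar>shrink_fanin W l j t l' i k - W l' i k\<bar> = t * \<bar>W l' i k\<bar>"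
        using elim by (simp add: shrink_fanin_def algebra_simps abs_mult)
      also have "\<dots> \<le> t * budget"
        using abs_weight_le_budget[OF proper_local_min_budgeted[OF W] that(1,3,2)] elim by simp
      finally show ?thesis
        using elim by simp
    qed (use \<open>\<epsilon> > 0\<close> in \<open>auto simp: shrink_fanin_def\<close>)
    then show ?case
      by (intro min) blast
  qed
qed

lemma fanin_pos:
  assumes W: "proper_local_min d W" and l: "Suc l < L" and j: "j < d (Suc l)"
  shows "0 < lp_norm p (d l) (\<lambda>i. W (Suc l) i j)"
proof -
  obtain i where "i < d l" "W (Suc l) i j \<noteq> 0"
    using W l j unfolding proper_local_min_def proper_def by fastforce
  then show ?thesis
    using abs_le_lp_norm[OF p_pos, of i "d l" "\<lambda>i. W (Suc l) i j"] by simp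
qed

lemma shrink_gain_nonneg: "Suc l \<le> L \<Longrightarrow> 0 \<le> shrink_gain M l"
  unfolding shrink_gain_def using act_lip_nonneg[of "Suc l"] act_bound_nonneg growth_ge(1)[of "Suc l" M]
  by (simp add: order_trans[OF zero_le_one])

lemma fanout_lower_bound:
  assumes W: "proper_local_min d W" and l: "Suc l < L" and j: "j < d (Suc l)"
    and widths: "\<And>m. Suc l < m \<Longrightarrow> m \<le> L \<Longrightarrow> d m \<le> M"
  shows "lam \<le> b3 error_level * real CARD('o) * shrink_gain M l
                 * lp_norm p (d (Suc (Suc l))) (\<lambda>k. W (Suc (Suc l)) j k)"
proof -
  let ?fanin = "lp_norm p (d l) (\<lambda>i. W (Suc l) i j)"
  let ?fanout = "lp_norm p (d (Suc (Suc l))) (\<lambda>k. W (Suc (Suc l)) j k)"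
  let ?A = "?fanin * ?fanout * shrink_gain M l" and ?c = "b3 error_level * real CARD('o)"
  let ?V = "shrink_fanin W (Suc l) j"
  have d0: "d 0 = CARD('i)" and dL: "d L = CARD('o)"
    using W by (auto simp: proper_local_min_def)
  have A: "0 \<le> ?A"
    using shrink_gain_nonneg l by (simp add: lp_norm_nonneg)
  have close: "norm (net L \<sigma> d (?V t) x - net L \<sigma> d W x :: real ^ 'o) \<le> t * ?A"
    if "0 < t" "t < 1" "(x, y) \<in> D" for t x y
    using net_shrink_fanin_diff_le[OF proper_local_min_budgeted[OF W] d0 dL that(3) _ _ l j widths] that
    by (simp add: mult_ac)
  have err: "eventually (\<lambda>t. mean_err d (?V t) - mean_err d W \<le> ?c * (t * ?A)) (at_right 0)"
    by (rule eventually_mean_err_diff_le[OF W A]) (rule close)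
  have "eventually (\<lambda>t. (0 < t \<and> t < 1) \<and> E_err L \<sigma> e D lam p d W \<le> E_err L \<sigma> e D lam p d (?V t)
          \<and> mean_err d (?V t) - mean_err d W \<le> ?c * (t * ?A)) (at_right 0)"
    using eventually_conj[OF eventually_at_right_0_lt_1
        eventually_conj[OF eventually_local_min_shrink_fanin[OF W _ j] err]] l
    by simp
  then obtain t where t: "0 < t" "t < 1" and min: "E_err L \<sigma> e D lam p d W \<le> E_err L \<sigma> e D lam p d (?V t)"
    and err: "mean_err d (?V t) - mean_err d W \<le> ?c * (t * ?A)"
    using eventually_happens'[OF trivial_limit_at_right_real] by blast
  have "Omega_in L d (?V t) lam p = Omega_in L d W lam p - lam * (t * ?fanin)"
    using Omega_in_shrink_fanin[OF p_pos, of t "Suc l" L j d W lam] t l j by simp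
  then have "(t * ?fanin) * lam \<le> (t * ?fanin) * (?c * shrink_gain M l * ?fanout)"
    using min err unfolding E_err_def by (simp add: algebra_simps)
  then show ?thesis
    using t fanin_pos[OF W l j] by (simp add: mult_le_cancel_left_pos)
qed

lemma width_bound_step:
  assumes l: "Suc l < L"
    and widths: "\<And>d W m. proper_local_min d W \<Longrightarrow> Suc l < m \<Longrightarrow> m \<le> L \<Longrightarrow> d m \<le> M"
  shows "\<exists>M'. \<forall>d W. proper_local_min d W \<longrightarrow> d (Suc l) \<le> M'"
proof -
  let ?K = "b3 error_level * real CARD('o) * shrink_gain M l"
  let ?bound = "real M * budget powr p / (lam / ?K) powr p"
  have "real (d (Suc l)) \<le> ?bound" if W: "proper_local_min d W" for d W
  proof (cases "d (Suc l) = 0")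
    case False
    let ?fanout = "\<lambda>j. lp_norm p (d (Suc (Suc l))) (\<lambda>k. W (Suc (Suc l)) j k)"
    have fanout: "lam \<le> ?K * ?fanout j" if "j < d (Suc l)" for j
      by (rule fanout_lower_bound[OF W l that widths[OF W]])
    have fanout0: "lam \<le> ?K * ?fanout 0"
      using fanout False by simp
    have K: "?K > 0"
    proof (rule ccontr)
      assume "\<not> ?K > 0"
      then have "?K * ?fanout 0 \<le> 0"
        by (simp add: mult_nonpos_nonneg lp_norm_nonneg)
      then show False
        using fanout0 lam by simp
    qed
    have "real (d (Suc l)) * (lam / ?K) powr p \<le> real (d (Suc (Suc l))) * budget powr p"
    proof (rule row_count_powr_le[OF p_pos])
      show "lam / ?K \<le> ?fanout j" if "j < d (Suc l)" for j
        using fanout[OF that] K by (simp add: pos_divide_le_eq mult.commute)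
      show "lp_norm p (d (Suc l)) (\<lambda>j. W (Suc (Suc l)) j k) \<le> budget" if "k < d (Suc (Suc l))" for k
        using fanin_le_budget[OF proper_local_min_budgeted[OF W] _ that] l by simp
    qed (use K lam in simp)
    also have "\<dots> \<le> real M * budget powr p"
      using widths[OF W, of "Suc (Suc l)"] l by (intro mult_right_mono) auto
    finally have "real (d (Suc l)) * (lam / ?K) powr p \<le> real M * budget powr p" .
    moreover have "0 < (lam / ?K) powr p"
      using divide_pos_pos[OF lam K] by (metis powr_gt_zero order_less_irrefl)
    ultimately show ?thesis
      by (simp only: pos_le_divide_eq)
  qed simp
  then show ?thesis
    by (meson of_nat_le_iff order_trans real_nat_ceiling_ge)
qed

lemma widths_from_top_bounded:
  "n < L \<Longrightarrow> \<exists>M. \<forall>d W. proper_local_min d W \<longrightarrow> (\<forall>m. L - n \<le> m \<longrightarrow> m \<le> L \<longrightarrow> d m \<le> M)"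
proof (induction n)
  case 0
  show ?case
    by (intro exI[of _ "CARD('o)"]) (auto simp: proper_local_min_def)
next
  case (Suc n)
  then obtain M where M: "\<And>d W m. proper_local_min d W \<Longrightarrow> L - n \<le> m \<Longrightarrow> m \<le> L \<Longrightarrow> d m \<le> M"
    by auto
  have l: "Suc (L - Suc (Suc n)) < L" and top: "Suc (L - Suc (Suc n)) = L - Suc n"
    using Suc.prems by auto
  have "\<exists>M'. \<forall>d W. proper_local_min d W \<longrightarrow> d (Suc (L - Suc (Suc n))) \<le> M'"
    by (rule width_bound_step[where M = M, OF l]) (rule M, auto simp: top)
  then obtain M' where M': "\<And>d W. proper_local_min d W \<Longrightarrow> d (L - Suc n) \<le> M'"
    unfolding top by blast
  have "d m \<le> max M M'" if W: "proper_local_min d W" and m: "L - Suc n \<le> m" "m \<le> L" for d W m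
  proof (cases "m = L - Suc n")
    case False
    then have "L - n \<le> m"
      using m Suc.prems by arith
    then show ?thesis
      using M[OF W _ m(2)] by (meson max.coboundedI1)
  qed (use M'[OF W] in auto)
  then show ?case
    by blast
qed

lemma hidden_widths_bounded: "\<exists>M. \<forall>d W. proper_local_min d W \<longrightarrow> (\<forall>l\<in>{1..L - 1}. d l \<le> M)"
proof (cases "L = 0")
  case False
  then obtain M where M: "\<And>d W m. proper_local_min d W \<Longrightarrow> L - (L - 1) \<le> m \<Longrightarrow> m \<le> L \<Longrightarrow> d m \<le> M"
    using widths_from_top_bounded[of "L - 1"] by auto
  show ?thesis
  proof (intro exI[of _ M] allI impI ballI)
    show "d l \<le> M" if "proper_local_min d W" "l \<in> {1..L - 1}" for d W l
      using that False by (intro M) auto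
  qed
qed simp

end

theorem lemma2:
  fixes L :: nat
    and \<sigma> :: "nat \<Rightarrow> real \<Rightarrow> real"
    and e :: "real ^ 'o::finite \<Rightarrow> 'y \<Rightarrow> real"
    and D :: "((real ^ 'i::finite) \<times> 'y) set"
    and lam p B :: real
  assumes L: "1 \<le> L"
    and D: "finite D"
    and sigma_diff: "\<forall>l\<in>{1..L}. \<forall>s. \<sigma> l differentiable (at s)"
    and sigma_bounds: "\<exists>b1 b2 :: nat \<Rightarrow> real \<Rightarrow> real.
          \<forall>l\<in>{1..L}. \<forall>S\<ge>0. 0 \<le> b1 l S \<and> 0 \<le> b2 l S \<and>
            (\<forall>s. \<bar>s\<bar> \<le> S \<longrightarrow> \<bar>\<sigma> l s\<bar> \<le> b1 l S * \<bar>s\<bar> \<and> \<bar>deriv (\<sigma> l) s\<bar> \<le> b2 l S)"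
    and e_nonneg: "\<forall>v y. 0 \<le> e v y"
    and e_diff: "\<forall>v y. (\<lambda>u. e u y) differentiable (at v)"
    and e_bound: "\<exists>b3 :: real \<Rightarrow> real. \<forall>S\<ge>0. 0 \<le> b3 S \<and>
          (\<forall>v y. e v y \<le> S \<longrightarrow>
             (\<forall>k. \<bar>frechet_derivative (\<lambda>u. e u y) (at v) (axis k 1)\<bar> \<le> b3 S))"
    and lam: "lam > 0"
    and p: "1 \<le> p"
  shows "\<exists>M::nat. \<forall>d W. d 0 = CARD('i) \<and> d L = CARD('o) \<and>
            local_min L d (E_err L \<sigma> e D lam p d) W \<and>
            E_err L \<sigma> e D lam p d W \<le> B \<and> proper L d W
          \<longrightarrow> (\<forall>l\<in>{1..L-1}. d l \<le> M)"
proof -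
  obtain b1 b2 :: "nat \<Rightarrow> real \<Rightarrow> real" where b12: "\<forall>l\<in>{1..L}. \<forall>S\<ge>0. 0 \<le> b1 l S \<and> 0 \<le> b2 l S \<and>
      (\<forall>s. \<bar>s\<bar> \<le> S \<longrightarrow> \<bar>\<sigma> l s\<bar> \<le> b1 l S * \<bar>s\<bar> \<and> \<bar>deriv (\<sigma> l) s\<bar> \<le> b2 l S)"
    using sigma_bounds by blast
  obtain b3 :: "real \<Rightarrow> real" where b3: "\<forall>S\<ge>0. 0 \<le> b3 S \<and>
      (\<forall>v y. e v y \<le> S \<longrightarrow> (\<forall>k. \<bar>frechet_derivative (\<lambda>u. e u y) (at v) (axis k 1)\<bar> \<le> b3 S))"
    using e_bound by blast
  \<comment> \<open>Raising B to max B 0 only enlarges the class of minima and makes B/lam nonnegative.\<close>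
  interpret regularized_net L \<sigma> e D lam p "max B 0" b1 b2 b3
  proof unfold_locales
    show "\<bar>frechet_derivative (\<lambda>u. e u y) (at v) (axis k 1)\<bar> \<le> b3 S" if "e v y \<le> S" for S v y k
      using b3 e_nonneg that by (meson order_trans)
  qed (use D sigma_diff b12 e_nonneg e_diff b3 lam p in \<open>auto intro: order_trans[OF abs_ge_zero]\<close>)
  obtain M where M: "\<And>d W l. proper_local_min d W \<Longrightarrow> l \<in> {1..L - 1} \<Longrightarrow> d l \<le> M"
    using hidden_widths_bounded by blast
  show ?thesis
  proof (intro exI[of _ M] allI impI ballI)
    fix d W l
    assume "d 0 = CARD('i) \<and> d L = CARD('o) \<and> local_min L d (E_err L \<sigma> e D lam p d) W \<and>
        E_err L \<sigma> e D lam p d W \<le> B \<and> proper L d W" and "l \<in> {1..L - 1}"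
    then show "d l \<le> M"
      by (intro M[of d W]) (auto simp: proper_local_min_def)
  qed
qed

end
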